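(* The function $F_m$ is strictly decreasing on $(-\infty,0)$ and strictly increasing on $(0,\infty)$. In particular, the set of minimizers of $F_m$ over $\mathbb R$ is $\{0\}$.
   Context: Fix $m>1/2$. Let $c_m:=\left(\int_{\mathbb R}(1+x^2)^{-m}dx\right)^{-1}$ and $\nu_m(dx):=c_m(1+x^2)^{-m}dx$. Define $F_m(t):=\int_{\mathbb R}\log(1+(x-t)^2)\,\nu_m(dx)$ for $t\in\mathbb R$. *)

theory Defs
  imports "HOL-Analysis.Analysis"
begin

definition c_const :: "real \<Rightarrow> real" where
  "c_const m = inverse (\<integral>x. (1 + x\<^sup>2) powr (-m) \<partial>lborel)"

definition nu :: "real \<Rightarrow> real measure" where
  "nu m = density lborel (\<lambda>x. ennreal (c_const m * (1 + x\<^sup>2) powr (-m)))"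

definition F :: "real \<Rightarrow> real \<Rightarrow> real" where
  "F m t = (\<integral>x. ln (1 + (x - t)\<^sup>2) \<partial>(nu m))"

end

theory Submission
  imports Defs
begin

(* Write F_m(t) as the integral of w(x) g(x - t) with the weight w = c_m (1+x^2)^(-m), strictly
   decreasing in |x|, and the even kernel g = ln(1+x^2), strictly increasing in |x|.
   For 0 <= s < t, the reflection x -> r - x with r = s + t swaps g(x - s) and g(x - t), so
   2 (F_m(t) - F_m(s)) is the integral of (w(x) - w(r - x)) (g(x - t) - g(x - s)); both factors
   have the sign of r/2 - x, hence the integrand is positive off x = r/2.  F_m is even, which
   gives the behaviour on the negative axis and 0 as the unique minimiser. *)

lemma integrable_one_plus_abs_powr:
  fixes e :: real
  assumes "e < -1"
  shows "integrable lborel (\<lambda>x. (1 + \<bar>x\<bar>) powr e)"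
proof -
  define g where "g x = indicator {1..} x * x powr e" for x :: real
  have "(\<lambda>x. x powr e) absolutely_integrable_on {1..}"
    using has_integral_powr_to_inf[OF assms, of 1] by (intro nonnegative_absolutely_integrable_1) auto
  then have "integrable lborel g"
    unfolding g_def set_integrable_def by (subst (asm) integrable_completion) auto
  then have "integrable lborel (\<lambda>x. g (1 + 1 * x) + g (1 + (-1) * x))"
    by (intro Bochner_Integration.integrable_add lborel_integrable_real_affine) auto
  then show ?thesis
    by (rule Bochner_Integration.integrable_bound) (auto simp: g_def indicator_def)
qed

lemma integrable_one_plus_square_powr:
  fixes a :: real
  assumes "a > 1/2"
  shows "integrable lborel (\<lambda>x. (1 + x\<^sup>2) powr (-a))"
proof -
  have "integrable lborel (\<lambda>x. 2 powr a * (1 + \<bar>x\<bar>) powr (-2*a))"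
    using integrable_one_plus_abs_powr[of "-2*a"] assms by simp
  then show ?thesis
  proof (rule Bochner_Integration.integrable_bound)
    show "AE x in lborel. norm ((1 + x\<^sup>2) powr (-a)) \<le> norm (2 powr a * (1 + \<bar>x\<bar>) powr (-2*a))"
    proof (intro AE_I2)
      fix x :: real
      have pos: "0 < 1 + \<bar>x\<bar>"
        by simp
      have "(1 + \<bar>x\<bar>)\<^sup>2 / 2 \<le> 1 + x\<^sup>2"
        using sum_squares_ge_zero[of "1 - \<bar>x\<bar>" 0] by (simp add: power2_eq_square algebra_simps)
      then have "(1 + x\<^sup>2) powr (-a) \<le> ((1 + \<bar>x\<bar>)\<^sup>2 / 2) powr (-a)"
        using assms by (intro powr_mono2') (auto simp: add_pos_nonneg)
      also have "\<dots> = ((1 + \<bar>x\<bar>)\<^sup>2) powr (-a) / 2 powr (-a)"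
        by (simp add: powr_divide)
      also have "((1 + \<bar>x\<bar>)\<^sup>2) powr (-a) = (1 + \<bar>x\<bar>) powr (-2*a)"
        using pos by (simp add: powr_powr flip: powr_numeral)
      finally show "norm ((1 + x\<^sup>2) powr (-a)) \<le> norm (2 powr a * (1 + \<bar>x\<bar>) powr (-2*a))"
        by (simp add: powr_minus_divide)
    qed
  qed (measurable)
qed

lemma one_plus_diff_square_le:
  fixes x t :: real
  shows "1 + (x - t)\<^sup>2 \<le> 2 * (1 + t\<^sup>2) * (1 + x\<^sup>2)"
proof -
  have "2 * (1 + t\<^sup>2) * (1 + x\<^sup>2) - (1 + (x - t)\<^sup>2) = 1 + (x + t)\<^sup>2 + 2 * (x * t)\<^sup>2"
    by algebra
  then show ?thesis
    by (smt (verit) zero_le_power2)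
qed

lemma integrable_one_plus_square_powr_mult_ln:
  fixes a t :: real
  assumes "a > 1/2"
  shows "integrable lborel (\<lambda>x. (1 + x\<^sup>2) powr (-a) * ln (1 + (x - t)\<^sup>2))"
proof -
  define d where "d = (a - 1/2) / 2"
  define K where "K = ln (2 * (1 + t\<^sup>2))"
  have d: "d > 0"
    using assms by (simp add: d_def)
  have "a - d > 1/2"
    using assms by (simp add: d_def field_simps)
  then have "integrable lborel (\<lambda>x. K * (1 + x\<^sup>2) powr (-a) + (1/d) * (1 + x\<^sup>2) powr (-(a - d)))"
    using integrable_one_plus_square_powr[of a] integrable_one_plus_square_powr[of "a - d"] assms
    by simp
  then show ?thesis
  proof (rule Bochner_Integration.integrable_bound)
    show "AE x in lborel. norm ((1 + x\<^sup>2) powr (-a) * ln (1 + (x - t)\<^sup>2))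
            \<le> norm (K * (1 + x\<^sup>2) powr (-a) + (1/d) * (1 + x\<^sup>2) powr (-(a - d)))"
    proof (intro AE_I2)
      fix x :: real
      have "ln (1 + (x - t)\<^sup>2) \<le> ln (2 * (1 + t\<^sup>2) * (1 + x\<^sup>2))"
        using one_plus_diff_square_le by (simp add: add_pos_nonneg)
      also have "\<dots> = K + ln (1 + x\<^sup>2)"
        unfolding K_def by (intro ln_mult_pos) (simp_all add: add_pos_nonneg)
      also have "\<dots> \<le> K + (1 + x\<^sup>2) powr d / d"
        using ln_powr_bound[OF _ d] by simp
      finally have "(1 + x\<^sup>2) powr (-a) * ln (1 + (x - t)\<^sup>2)
                      \<le> (1 + x\<^sup>2) powr (-a) * (K + (1 + x\<^sup>2) powr d / d)"
        by (simp add: mult_left_mono)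
      also have "\<dots> = K * (1 + x\<^sup>2) powr (-a) + (1/d) * (1 + x\<^sup>2) powr (-(a - d))"
        by (simp add: algebra_simps flip: powr_add)
      finally show "norm ((1 + x\<^sup>2) powr (-a) * ln (1 + (x - t)\<^sup>2))
                      \<le> norm (K * (1 + x\<^sup>2) powr (-a) + (1/d) * (1 + x\<^sup>2) powr (-(a - d)))"
        by simp
    qed
  qed (measurable)
qed

lemma one_plus_square_less_if_abs_less:
  fixes x y :: real
  assumes "\<bar>x\<bar> < \<bar>y\<bar>"
  shows "1 + x\<^sup>2 < 1 + y\<^sup>2"
  using assms by (metis abs_le_square_iff add_less_cancel_left not_le)

lemma integral_pos_if_AE_pos:
  fixes f :: "'a \<Rightarrow> real"
  assumes f: "integrable M f" and pos: "AE x in M. 0 < f x" and M: "emeasure M (space M) \<noteq> 0"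
  shows "0 < integral\<^sup>L M f"
proof -
  have nonneg: "AE x in M. 0 \<le> f x"
    using pos by eventually_elim simp
  have "integral\<^sup>L M f \<noteq> 0"
  proof
    assume "integral\<^sup>L M f = 0"
    then have "AE x in M. f x = 0"
      using integral_nonneg_eq_0_iff_AE[OF f nonneg] by simp
    with pos have "AE x in M. False"
      by eventually_elim simp
    with M show False
      by (simp add: eventually_False ae_filter_eq_bot_iff)
  qed
  moreover have "0 \<le> integral\<^sup>L M f"
    using integral_nonneg_AE[OF nonneg] .
  ultimately show ?thesis
    by simp
qed

definition weighted_shift_integral :: "(real \<Rightarrow> real) \<Rightarrow> (real \<Rightarrow> real) \<Rightarrow> real \<Rightarrow> real" where
  "weighted_shift_integral w g t = (\<integral>x. w x * g (x - t) \<partial>lborel)"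

lemma weighted_shift_integral_even:
  assumes "\<And>x. w (-x) = w x" and "\<And>x. g (-x) = g x"
  shows "weighted_shift_integral w g (-t) = weighted_shift_integral w g t"
proof -
  have "(\<integral>x. w x * g (x - (-t)) \<partial>lborel)
          = \<bar>-1\<bar> *\<^sub>R (\<integral>x. w (0 + (-1) * x) * g ((0 + (-1) * x) - (-t)) \<partial>lborel)"
    by (rule lborel_integral_real_affine) simp
  also have "\<dots> = (\<integral>x. w x * g (x - t) \<partial>lborel)"
    using assms(2)[of "x - t" for x] by (simp add: assms(1))
  finally show ?thesis
    unfolding weighted_shift_integral_def .
qed

lemma weighted_shift_integral_strict_mono:
  assumes w_decr: "\<And>x y. \<bar>x\<bar> < \<bar>y\<bar> \<Longrightarrow> w y < w x"
    and g_even: "\<And>x. g (-x) = g x"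
    and g_incr: "\<And>x y. \<bar>x\<bar> < \<bar>y\<bar> \<Longrightarrow> g x < g y"
    and integrable: "\<And>t. integrable lborel (\<lambda>x. w x * g (x - t))"
    and "0 \<le> s" "s < t"
  shows "weighted_shift_integral w g s < weighted_shift_integral w g t"
proof -
  define r where "r = s + t"
  define h where "h x = g (x - t) - g (x - s)" for x
  have r: "r > 0"
    using \<open>0 \<le> s\<close> \<open>s < t\<close> by (simp add: r_def)
  have h_reflect: "h (r - x) = - h x" for x
  proof -
    have "r - x - t = -(x - s)" and "r - x - s = -(x - t)"
      by (simp_all add: r_def)
    then have "h (r - x) = g (-(x - s)) - g (-(x - t))"
      by (simp only: h_def)
    also have "\<dots> = - h x"
      unfolding g_even h_def by simp
    finally show ?thesis .
  qed
  have wh: "integrable lborel (\<lambda>x. w x * h x)"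
    using Bochner_Integration.integrable_diff[OF integrable integrable]
    by (simp add: h_def algebra_simps)
  have wh_reflected: "integrable lborel (\<lambda>x. w (r - x) * h x)"
    using lborel_integrable_real_affine[OF wh, of "-1" r]
    by (simp add: h_reflect)
  have "(\<integral>x. w x * h x \<partial>lborel) = \<bar>-1\<bar> *\<^sub>R (\<integral>x. w (r + (-1)*x) * h (r + (-1)*x) \<partial>lborel)"
    by (rule lborel_integral_real_affine) simp
  then have "(\<integral>x. w x * h x \<partial>lborel) = - (\<integral>x. w (r - x) * h x \<partial>lborel)"
    by (simp add: h_reflect)
  then have "2 * (\<integral>x. w x * h x \<partial>lborel) = (\<integral>x. (w x - w (r - x)) * h x \<partial>lborel)"
    using Bochner_Integration.integral_diff[OF wh wh_reflected] by (simp add: left_diff_distrib)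
  moreover have "0 < (\<integral>x. (w x - w (r - x)) * h x \<partial>lborel)"
  proof (rule integral_pos_if_AE_pos)
    show "integrable lborel (\<lambda>x. (w x - w (r - x)) * h x)"
      using Bochner_Integration.integrable_diff[OF wh wh_reflected] by (simp add: left_diff_distrib)
    have off_center: "0 < (w x - w (r - x)) * h x" if "x \<noteq> r / 2" for x
    proof (cases "x < r / 2")
      case True
      then have "w (r - x) < w x" and "g (x - s) < g (x - t)"
        using r \<open>s < t\<close> by (auto intro!: w_decr g_incr simp: r_def)
      then show ?thesis
        by (simp add: h_def)
    next
      case False
      with that have "w x < w (r - x)" and "g (x - t) < g (x - s)"
        using r \<open>s < t\<close> by (auto intro!: w_decr g_incr simp: r_def)
      then show ?thesis
        by (simp add: h_def mult_neg_neg)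
    qed
    show "AE x in lborel. 0 < (w x - w (r - x)) * h x"
      using AE_lborel_singleton[of "r / 2"] by (rule eventually_mono) (rule off_center)
  qed simp
  ultimately have "0 < (\<integral>x. w x * h x \<partial>lborel)"
    by simp
  then show ?thesis
    using Bochner_Integration.integral_diff[OF integrable integrable]
    by (simp add: weighted_shift_integral_def h_def right_diff_distrib)
qed

lemma even_strictly_increasing_from_zero:
  fixes f :: "real \<Rightarrow> 'a::linorder"
  assumes even: "\<And>t. f (-t) = f t"
    and incr: "\<And>s t. 0 \<le> s \<Longrightarrow> s < t \<Longrightarrow> f s < f t"
  shows "strict_antimono_on {..<0} f \<and> strict_mono_on {0<..} f \<and> {t. \<forall>s. f t \<le> f s} = {0}"
proof (intro conjI)
  show "strict_antimono_on {..<0} f"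
    by (rule monotone_onI) (metis even incr lessThan_iff neg_0_less_iff_less less_imp_le neg_less_iff_less)
  show "strict_mono_on {0<..} f"
    by (rule strict_mono_onI) (simp add: incr)
  have "f 0 < f t" if "t \<noteq> 0" for t
    using incr[of 0 "\<bar>t\<bar>"] even[of t] that by (cases "t \<ge> 0") auto
  then have "(\<forall>s. f t \<le> f s) \<longleftrightarrow> t = 0" for t
    by (metis less_imp_le not_less)
  then show "{t. \<forall>s. f t \<le> f s} = {0}"
    by auto
qed

lemma c_const_pos:
  assumes "m > 1/2"
  shows "c_const m > 0"
proof -
  have "0 < (\<integral>x. (1 + x\<^sup>2) powr (-m) \<partial>lborel)"
    using integrable_one_plus_square_powr[OF assms]
    by (intro integral_pos_if_AE_pos) (auto simp: add_nonneg_eq_0_iff)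
  then show ?thesis
    by (simp add: c_const_def)
qed

lemma F_eq_weighted_shift_integral:
  "F m = weighted_shift_integral (\<lambda>x. c_const m * (1 + x\<^sup>2) powr (-m)) (\<lambda>x. ln (1 + x\<^sup>2))"
proof
  fix t
  have "c_const m \<ge> 0"
    by (simp add: c_const_def)
  then show "F m t = weighted_shift_integral (\<lambda>x. c_const m * (1 + x\<^sup>2) powr (-m)) (\<lambda>x. ln (1 + x\<^sup>2)) t"
    unfolding F_def nu_def weighted_shift_integral_def by (subst integral_density) auto
qed

theorem lemma2p5:
  fixes m :: real
  assumes "m > 1/2"
  shows "strict_antimono_on {..<0} (F m) \<and> strict_mono_on {0<..} (F m)
         \<and> {t. \<forall>s. F m t \<le> F m s} = {0}"
proof (rule even_strictly_increasing_from_zero)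
  define w where "w x = c_const m * (1 + x\<^sup>2) powr (-m)" for x :: real
  define g where "g x = ln (1 + x\<^sup>2)" for x :: real
  have F: "F m = weighted_shift_integral w g"
    unfolding w_def g_def by (rule F_eq_weighted_shift_integral)
  have w_decr: "w y < w x" if "\<bar>x\<bar> < \<bar>y\<bar>" for x y
    unfolding w_def using c_const_pos[OF assms] assms one_plus_square_less_if_abs_less[OF that]
    by (intro mult_strict_left_mono powr_less_mono2_neg) (simp_all add: add_pos_nonneg)
  have g_incr: "g x < g y" if "\<bar>x\<bar> < \<bar>y\<bar>" for x y
    unfolding g_def using one_plus_square_less_if_abs_less[OF that] by (simp add: add_pos_nonneg)
  have g_even: "g (-x) = g x" for x
    unfolding g_def by simp
  have integrable: "integrable lborel (\<lambda>x. w x * g (x - t))" for t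
    using integrable_one_plus_square_powr_mult_ln[OF assms, of t]
    unfolding w_def g_def by (simp add: mult.assoc)
  show "F m (-t) = F m t" for t
    unfolding F w_def g_def by (rule weighted_shift_integral_even) simp_all
  show "F m s < F m t" if "0 \<le> s" "s < t" for s t
    unfolding F using w_decr g_even g_incr integrable that
    by (rule weighted_shift_integral_strict_mono)
qed

end
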